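(* Let $\mathfrak{M}=\{M^{(\alpha)}:\alpha>0\}$ be a non-quasianalytic weight matrix of R-moderate growth and consider $\mathfrak{K}=\mathfrak{K}(\mathfrak{M})=\{K^{(\alpha)}:\alpha>0\}$. Then for every $\alpha>0$ there exists $\beta>0$ with $K^{(\alpha)}\prec_{SV}M^{(\beta)}$.
   Context: A weight sequence is $M=(M_k)_{k\ge0}$ with $M_k=\mu_0\cdots\mu_k$, $1=\mu_0\le\mu_1\le\cdots$, $\mu_k\to\infty$; non-quasianalytic if $\sum1/\mu_k<\infty$. A weight matrix is a family $\{M^{(\alpha)}:\alpha>0\}$ of weight sequences with $M^{(\alpha)}\le M^{(\beta)}$ for $\alpha\le\beta$; non-quasianalytic if all members are; R-moderate growth: for every member $M$ there are a member $N$ and $C\ge1$ with $M_{j+k}\le C^{j+k}N_jN_k$. $M'\prec_{SV}M$ means: $\exists s\in\mathbb{N}_{\ge1}$, $\sup_{j\ge1}\frac1j\sup_{0\le i<j}(M'_j/(s^jM_i))^{1/(j-i)}\sum_{k\ge j}1/\mu_k<\infty$. $\omega_M(t)=\sup_k\log(t^kM_0/M_k)$, $\widetilde\omega_M=\omega_M+\log(1+t^2)$; $\kappa_\omega(t)=\int_1^\infty\omega(ts)s^{-2}ds$, $\varphi^*_\omega(x)=\sup_{y\ge0}(xy-\omega(e^y))$. $\kappa_\alpha=\kappa_{\widetilde\omega_{M^{(\alpha)}}}$, $K^{(\alpha)}_j=\exp(\varphi^*_{\kappa_\alpha}(j))$ with $\kappa_\alpha$ replaced by an equivalent normalized function (vanishing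 on $[0,1]$). *)

theory Defs
  imports "HOL-Analysis.Analysis"
begin

text \<open>Quotients mu_k = M_k / M_(k-1) (k \<ge> 1), mu_0 = M_0, so that M_k = mu_0 * ... * mu_k.\<close>
definition quot :: "(nat \<Rightarrow> real) \<Rightarrow> nat \<Rightarrow> real" where
  "quot M k = (if k = 0 then M 0 else M k / M (k - 1))"

definition weight_seq :: "(nat \<Rightarrow> real) \<Rightarrow> bool" where
  "weight_seq M \<longleftrightarrow> M 0 = 1 \<and> (\<forall>k. 0 < M k) \<and> incseq (quot M)
     \<and> filterlim (quot M) at_top sequentially"

definition nonquasianalytic :: "(nat \<Rightarrow> real) \<Rightarrow> bool" where
  "nonquasianalytic M \<longleftrightarrow> summable (\<lambda>k. 1 / quot M k)"

text \<open>Weight matrix indexed by alpha > 0 (values at alpha \<le> 0 are irrelevant).\<close>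
definition weight_matrix :: "(real \<Rightarrow> nat \<Rightarrow> real) \<Rightarrow> bool" where
  "weight_matrix Mat \<longleftrightarrow> (\<forall>\<alpha>>0. weight_seq (Mat \<alpha>))
     \<and> (\<forall>\<alpha> \<beta>. 0 < \<alpha> \<and> \<alpha> \<le> \<beta> \<longrightarrow> (\<forall>j. Mat \<alpha> j \<le> Mat \<beta> j))"

definition nonquasianalytic_matrix :: "(real \<Rightarrow> nat \<Rightarrow> real) \<Rightarrow> bool" where
  "nonquasianalytic_matrix Mat \<longleftrightarrow> (\<forall>\<alpha>>0. nonquasianalytic (Mat \<alpha>))"

definition R_moderate_growth :: "(real \<Rightarrow> nat \<Rightarrow> real) \<Rightarrow> bool" where
  "R_moderate_growth Mat \<longleftrightarrow> (\<forall>\<alpha>>0. \<exists>\<beta>>0. \<exists>C\<ge>1. \<forall>j k.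
      Mat \<alpha> (j + k) \<le> C ^ (j + k) * Mat \<beta> j * Mat \<beta> k)"

definition omegaM :: "(nat \<Rightarrow> real) \<Rightarrow> real \<Rightarrow> real" where
  "omegaM M t = (if 0 < t then (SUP k. ln (t ^ k * M 0 / M k)) else 0)"

definition omegaM_tilde :: "(nat \<Rightarrow> real) \<Rightarrow> real \<Rightarrow> real" where
  "omegaM_tilde M t = omegaM M t + ln (1 + t\<^sup>2)"

definition kappa :: "(real \<Rightarrow> real) \<Rightarrow> real \<Rightarrow> real" where
  "kappa \<omega> t = (LBINT s:{1..}. \<omega> (t * s) / s\<^sup>2)"

definition phistar :: "(real \<Rightarrow> real) \<Rightarrow> real \<Rightarrow> real" where
  "phistar \<omega> x = (SUP y\<in>{0..}. x * y - \<omega> (exp y))"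

definition normalized_version :: "(real \<Rightarrow> real) \<Rightarrow> (real \<Rightarrow> real) \<Rightarrow> bool" where
  "normalized_version \<kappa> \<kappa>' \<longleftrightarrow> (\<forall>t\<in>{0..1}. \<kappa>' t = 0)
     \<and> (\<exists>D. \<forall>t\<ge>0. \<bar>\<kappa>' t - \<kappa> t\<bar> \<le> D)"

definition assoc_seq :: "(real \<Rightarrow> real) \<Rightarrow> nat \<Rightarrow> real" where
  "assoc_seq \<kappa>' j = exp (phistar \<kappa>' (real j))"

definition prec_SV :: "(nat \<Rightarrow> real) \<Rightarrow> (nat \<Rightarrow> real) \<Rightarrow> bool" where
  "prec_SV M' M \<longleftrightarrow> (\<exists>s::nat. 1 \<le> s \<and> (\<exists>C. \<forall>j\<ge>1. \<forall>i<j.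
      (1 / real j) * (M' j / (real s ^ j * M i)) powr (1 / real (j - i))
        * (\<Sum>k. 1 / quot M (k + j)) \<le> C))"

end

theory Submission
  imports Defs
begin

text \<open>
  Write mu_k for the quotients of M and sigma_j for the tail sum of the 1/mu_k over k >= j.
  Since omega_M(t) is the sum of the positive parts of log(t/mu_k), multiplying t by
  s >= e * max 1 (mu_k/t) raises omega_M by at least one for each such k; integrating this
  against ds/s^2 over [1, oo) gives kappa(t) >= omega_M(t) + min t mu_j * sigma_j / e
  (the integral is finite because sum 1/mu_k < oo). Together with
  j log t - omega_M(t) <= log M_i + (j - i) log (min t mu_j) and the concavity bound
  L log r - r x <= L log (L/x) - L, this gives K_j <= e^D M_i ((j - i)/sigma_j)^(j - i)
  for all i < j, where D bounds the normalization error.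
\<close>

section \<open>The associated function of a weight sequence\<close>

lemma weight_seq_M0: "weight_seq M \<Longrightarrow> M 0 = 1"
  and weight_seq_pos: "weight_seq M \<Longrightarrow> 0 < M k"
  and weight_seq_quot_mono: "weight_seq M \<Longrightarrow> i \<le> k \<Longrightarrow> quot M i \<le> quot M k"
  by (auto simp: weight_seq_def incseq_def)

lemma weight_seq_quot_ge_1:
  assumes "weight_seq M" shows "1 \<le> quot M k"
  using weight_seq_quot_mono[OF assms, of 0 k] weight_seq_M0[OF assms] by (simp add: quot_def)

lemma weight_seq_quot_pos: "weight_seq M \<Longrightarrow> 0 < quot M k"
  using weight_seq_quot_ge_1[of M k] by simp

lemma weight_seq_Suc: "weight_seq M \<Longrightarrow> M (Suc k) = M k * quot M (Suc k)"
  using weight_seq_pos[of M k] by (simp add: quot_def)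

lemma weight_seq_le_quot_power:
  assumes M: "weight_seq M" and "i \<le> j"
  shows "M j \<le> M i * quot M j ^ (j - i)"
  using \<open>i \<le> j\<close>
proof (induction j rule: dec_induct)
  case (step j)
  have "M (Suc j) = M j * quot M (Suc j)"
    by (rule weight_seq_Suc[OF M])
  also have "\<dots> \<le> M i * quot M j ^ (j - i) * quot M (Suc j)"
    using step.IH weight_seq_quot_pos[OF M] by (simp add: mult_right_mono)
  also have "\<dots> \<le> M i * quot M (Suc j) ^ (j - i) * quot M (Suc j)"
    using weight_seq_quot_mono[OF M, of j "Suc j"] weight_seq_quot_pos[OF M] weight_seq_pos[OF M, of i]
    by (intro mult_right_mono mult_left_mono power_mono) (auto intro: less_imp_le)
  also have "\<dots> = M i * quot M (Suc j) ^ (Suc j - i)"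
    using step.hyps by (simp add: Suc_diff_le)
  finally show ?case .
qed simp

lemma weight_seq_eventually_quot_ge:
  assumes "weight_seq M" shows "\<exists>P. \<forall>k>P. t \<le> quot M k"
proof -
  have "eventually (\<lambda>k. t \<le> quot M k) sequentially"
    using assms by (simp add: weight_seq_def filterlim_at_top)
  then show ?thesis
    unfolding eventually_sequentially by (auto intro: less_imp_le)
qed

lemma weight_seq_ln_Suc:
  "weight_seq M \<Longrightarrow> ln (M (Suc k)) = ln (M k) + ln (quot M (Suc k))"
  using weight_seq_pos[of M k] weight_seq_quot_pos[of M "Suc k"]
  by (simp add: weight_seq_Suc ln_mult_pos)

lemma sum_ln_div_quot:
  assumes M: "weight_seq M" and "0 < t"
  shows "(\<Sum>k=1..p. ln (t / quot M k)) = real p * ln t - ln (M p)"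
proof (induction p)
  case (Suc p)
  then show ?case
    using \<open>0 < t\<close> weight_seq_quot_pos[OF M]
    by (simp add: weight_seq_ln_Suc[OF M] ln_divide_pos algebra_simps)
qed (simp add: weight_seq_M0[OF M])

lemma omegaM_eq_SUP:
  assumes M: "weight_seq M" and "0 < t"
  shows "omegaM M t = (SUP k. real k * ln t - ln (M k))"
  using assms weight_seq_pos[OF M]
  by (simp add: omegaM_def weight_seq_M0 ln_divide_pos ln_realpow)

lemma omegaM_term_le_sum_pos_part:
  assumes M: "weight_seq M" and "0 < t" and P: "\<forall>k>P. t \<le> quot M k"
  shows "real p * ln t - ln (M p) \<le> (\<Sum>k=1..P. max 0 (ln (t / quot M k)))"
proof -
  have vanish: "max 0 (ln (t / quot M k)) = 0" if "P < k" for k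
    using P that \<open>0 < t\<close> weight_seq_quot_pos[OF M, of k] by simp
  have "real p * ln t - ln (M p) = (\<Sum>k=1..p. ln (t / quot M k))"
    by (rule sum_ln_div_quot[OF M \<open>0 < t\<close>, symmetric])
  also have "\<dots> \<le> (\<Sum>k=1..p. max 0 (ln (t / quot M k)))"
    by (intro sum_mono) auto
  also have "\<dots> = (\<Sum>k\<in>{1..p} \<inter> {1..P}. max 0 (ln (t / quot M k)))"
    by (rule sum.mono_neutral_right) (auto intro!: vanish)
  also have "\<dots> \<le> (\<Sum>k=1..P. max 0 (ln (t / quot M k)))"
    by (rule sum_mono2) auto
  finally show ?thesis .
qed

lemma bdd_above_omegaM_terms:
  assumes M: "weight_seq M" and "0 < t"
  shows "bdd_above (range (\<lambda>k. real k * ln t - ln (M k)))"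
proof -
  obtain P where "\<forall>k>P. t \<le> quot M k"
    using weight_seq_eventually_quot_ge[OF M] by blast
  then show ?thesis
    using omegaM_term_le_sum_pos_part[OF assms] by (intro bdd_aboveI) blast
qed

lemma omegaM_ge:
  assumes M: "weight_seq M" and "0 < t"
  shows "real p * ln t - ln (M p) \<le> omegaM M t"
  unfolding omegaM_eq_SUP[OF assms] by (rule cSUP_upper[OF _ bdd_above_omegaM_terms[OF assms]]) simp

lemma omegaM_le_sum_pos_part:
  assumes M: "weight_seq M" and "0 < t" and "\<forall>k>P. t \<le> quot M k"
  shows "omegaM M t \<le> (\<Sum>k=1..P. max 0 (ln (t / quot M k)))"
  unfolding omegaM_eq_SUP[OF M \<open>0 < t\<close>]
  by (rule cSUP_least) (use omegaM_term_le_sum_pos_part[OF assms] in auto)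

lemma sum_pos_part_decseq:
  fixes a :: "nat \<Rightarrow> real"
  assumes "decseq a"
  shows "\<exists>q. (\<Sum>k=1..m. max 0 (a k)) = (\<Sum>k=1..q. a k)"
proof (induction m)
  case (Suc m)
  show ?case
  proof (cases "0 \<le> a (Suc m)")
    case True
    have "a (Suc m) \<le> a k" if "k \<le> Suc m" for k
      using \<open>decseq a\<close> that by (simp add: decseq_def)
    then have "(\<Sum>k=1..Suc m. max 0 (a k)) = (\<Sum>k=1..Suc m. a k)"
      using True by (intro sum.cong) force+
    then show ?thesis by blast
  next
    case False
    obtain q where "(\<Sum>k=1..m. max 0 (a k)) = (\<Sum>k=1..q. a k)"
      using Suc.IH by blast
    then show ?thesis using False by (intro exI[of _ q]) simp
  qed
qed (intro exI[of _ 0], simp)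

lemma omegaM_eq_sum_pos_part:
  assumes M: "weight_seq M" and "0 < t" and P: "\<forall>k>P. t \<le> quot M k"
  shows "omegaM M t = (\<Sum>k=1..P. max 0 (ln (t / quot M k)))"
proof (rule antisym[OF omegaM_le_sum_pos_part[OF assms]])
  have "decseq (\<lambda>k. ln (t / quot M k))"
    using \<open>0 < t\<close> weight_seq_quot_pos[OF M] weight_seq_quot_mono[OF M]
    by (auto simp: decseq_def intro!: divide_left_mono mult_pos_pos)
  then obtain q where "(\<Sum>k=1..P. max 0 (ln (t / quot M k))) = (\<Sum>k=1..q. ln (t / quot M k))"
    using sum_pos_part_decseq by blast
  then show "(\<Sum>k=1..P. max 0 (ln (t / quot M k))) \<le> omegaM M t"
    using omegaM_ge[OF M \<open>0 < t\<close>, of q] sum_ln_div_quot[OF M \<open>0 < t\<close>, of q] by simp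
qed

lemma omegaM_nonneg:
  assumes "weight_seq M" shows "0 \<le> omegaM M t"
  using omegaM_ge[OF assms, of t 0] weight_seq_M0[OF assms] by (cases "0 < t") (auto simp: omegaM_def)

lemma mono_omegaM:
  assumes M: "weight_seq M" shows "mono (omegaM M)"
proof
  fix a b :: real assume "a \<le> b"
  show "omegaM M a \<le> omegaM M b"
  proof (cases "0 < a")
    case True
    have "real k * ln a - ln (M k) \<le> omegaM M b" for k
    proof -
      have "real k * ln a \<le> real k * ln b"
        using True \<open>a \<le> b\<close> by (simp add: mult_left_mono)
      then show ?thesis
        using omegaM_ge[OF M, of b k] True \<open>a \<le> b\<close> by simp
    qed
    then show ?thesis
      unfolding omegaM_eq_SUP[OF M True] by (rule cSUP_least[OF UNIV_not_empty])
  qed (use omegaM_nonneg[OF M, of b] in \<open>simp add: omegaM_def\<close>)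
qed

lemma borel_measurable_omegaM[measurable]: "weight_seq M \<Longrightarrow> omegaM M \<in> borel_measurable borel"
  by (rule borel_measurable_mono[OF mono_omegaM])

lemma pos_part_ln_mult_ge:
  fixes t s q :: real
  assumes "0 < t" "1 \<le> s" "0 < q"
  shows "max 0 (ln (t / q)) + of_bool (exp 1 * max 1 (q / t) \<le> s) \<le> max 0 (ln (t * s / q))"
proof -
  have split: "ln (t * s / q) = ln (t / q) + ln s"
    using assms by (simp add: ln_mult_pos[symmetric] mult.commute)
  have "1 \<le> max 0 (ln (t * s / q)) - max 0 (ln (t / q))" if c: "exp 1 * max 1 (q / t) \<le> s"
  proof (cases "q \<le> t")
    case True
    have "exp 1 * 1 \<le> exp 1 * max 1 (q / t)"
      by (intro mult_left_mono) auto
    then have "exp 1 \<le> s" using c by linarith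
    then have "1 \<le> ln s" using assms by (simp add: ln_ge_iff)
    then show ?thesis using split True assms by simp
  next
    case False
    then have "exp 1 \<le> t * s / q" using c assms by (simp add: max_def field_simps)
    then have "1 \<le> ln (t * s / q)" using assms by (simp add: ln_ge_iff)
    then show ?thesis using False assms by simp
  qed
  moreover have "0 \<le> ln s" using assms by simp
  ultimately show ?thesis using split by (cases "exp 1 * max 1 (q / t) \<le> s") auto
qed

lemma omegaM_mult_ge:
  assumes M: "weight_seq M" and "0 < t" "1 \<le> s" and A: "finite A" "A \<subseteq> {1..}"
  shows "omegaM M t + (\<Sum>k\<in>A. of_bool (exp 1 * max 1 (quot M k / t) \<le> s)) \<le> omegaM M (t * s)"
proof -
  obtain P0 where P0: "\<forall>k>P0. t * s \<le> quot M k"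
    using weight_seq_eventually_quot_ge[OF M] by blast
  define P where "P = max P0 (Max (insert 0 A))"
  have Pts: "\<forall>k>P. t * s \<le> quot M k" and Pt: "\<forall>k>P. t \<le> quot M k"
    using P0 \<open>0 < t\<close> \<open>1 \<le> s\<close> by (auto simp: P_def intro: order.trans[of t "t * s"])
  have AP: "A \<subseteq> {1..P}"
    using A by (auto simp: P_def subset_eq le_max_iff_disj)
  define gain where "gain k = max 0 (ln (t * s / quot M k)) - max 0 (ln (t / quot M k))" for k
  have gain: "of_bool (exp 1 * max 1 (quot M k / t) \<le> s) \<le> gain k" for k
    using pos_part_ln_mult_ge[OF \<open>0 < t\<close> \<open>1 \<le> s\<close> weight_seq_quot_pos[OF M, of k]]
    unfolding gain_def by linarith
  have "(\<Sum>k\<in>A. of_bool (exp 1 * max 1 (quot M k / t) \<le> s)) \<le> (\<Sum>k\<in>A. gain k)"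
    by (intro sum_mono gain)
  also have "\<dots> \<le> (\<Sum>k=1..P. gain k)"
    using AP gain order.trans[OF _ gain] by (intro sum_mono2) auto
  also have "\<dots> = omegaM M (t * s) - omegaM M t"
    using \<open>0 < t\<close> \<open>1 \<le> s\<close>
    by (simp add: omegaM_eq_sum_pos_part[OF M _ Pts] omegaM_eq_sum_pos_part[OF M _ Pt] gain_def sum_subtractf)
  finally show ?thesis by simp
qed

section \<open>Finiteness of kappa\<close>

lemma ln_le_two_sqrt_minus_two:
  fixes x :: real assumes "0 < x" shows "ln x \<le> 2 * sqrt x - 2"
  using ln_le_minus_one[of "sqrt x"] ln_sqrt[of x] assms by simp

lemma ln_one_plus_square_le:
  fixes u :: real assumes "0 \<le> u" shows "ln (1 + u\<^sup>2) \<le> 4 * sqrt u"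
proof -
  have "ln (1 + u\<^sup>2) \<le> ln ((1 + u)\<^sup>2)"
    using assms by (subst ln_le_cancel_iff) (auto simp: power2_eq_square algebra_simps intro: add_pos_nonneg)
  also have "\<dots> = 2 * ln (1 + u)"
    using assms by (simp add: ln_realpow)
  also have "\<dots> \<le> 4 * sqrt (1 + u) - 4"
    using ln_le_two_sqrt_minus_two[of "1 + u"] assms by simp
  also have "\<dots> \<le> 4 * sqrt u"
    using sqrt_add_le_add_sqrt[of 1 u] assms by simp
  finally show ?thesis .
qed

lemma sqrt_div_square_eq_powr:
  fixes s :: real assumes "0 < s" shows "sqrt s / s\<^sup>2 = s powr (-3/2)"
proof -
  have "sqrt s / s\<^sup>2 = s powr (1/2) / s powr 2"
    using assms by (simp add: powr_half_sqrt powr_realpow)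
  also have "\<dots> = s powr (-3/2)"
    by (simp add: powr_diff[symmetric])
  finally show ?thesis .
qed

lemma has_integral_indicator_mult_UNIV:
  fixes f :: "'a::euclidean_space \<Rightarrow> real"
  shows "((\<lambda>x. indicator S x * f x) has_integral i) UNIV \<longleftrightarrow> (f has_integral i) S"
  unfolding indicator_times_eq_if(1) has_integral_restrict_UNIV ..

lemma nn_integral_powr_tail:
  fixes a c :: real assumes "0 < a" "0 \<le> c"
  shows "(\<integral>\<^sup>+ s. ennreal (c * indicator {a..} s * s powr (-3/2)) \<partial>lborel) = ennreal (2 * c / sqrt a)"
proof (rule nn_integral_has_integral_lborel)
  have "((\<lambda>s. s powr (-3/2)) has_integral 2 * a powr (-1/2)) {a..}"
    using has_integral_powr_to_inf[of "-3/2" a] assms by (simp add: mult.commute)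
  moreover have "a powr (-1/2) = 1 / sqrt a"
    using assms by (simp add: powr_minus_divide[of a "1/2", simplified] powr_half_sqrt)
  ultimately have "((\<lambda>s. indicator {a..} s * s powr (-3/2)) has_integral 2 / sqrt a) UNIV"
    by (simp only: has_integral_indicator_mult_UNIV) simp
  then show "((\<lambda>s. c * indicator {a..} s * s powr (-3/2)) has_integral 2 * c / sqrt a) UNIV"
    using has_integral_mult_right[of _ "2 / sqrt a" UNIV c] by (simp add: mult.assoc mult.commute)
qed (use assms in auto)

lemma has_integral_inverse_square_tail:
  fixes a :: real assumes "0 < a"
  shows "((\<lambda>s. indicator {a..} s / s\<^sup>2) has_integral 1 / a) UNIV"
  using has_integral_inverse_power_to_inf[of 2 a] assms
    has_integral_indicator_mult_UNIV[of "{a..}" "\<lambda>s. 1 / s\<^sup>2"]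
  by simp

lemma pos_part_ln_div_square_le:
  fixes t s q :: real assumes "0 < t" "1 \<le> s" "0 < q"
  shows "max 0 (ln (t * s / q)) / s\<^sup>2 \<le> 2 * sqrt (t / q) * indicator {q / t..} s * s powr (-3/2)"
proof (cases "q / t \<le> s")
  case True
  then have "1 \<le> t * s / q" using assms by (simp add: field_simps)
  moreover have "sqrt (t * s / q) = sqrt (t / q) * sqrt s"
    by (simp add: real_sqrt_mult[symmetric])
  ultimately have "max 0 (ln (t * s / q)) \<le> 2 * sqrt (t / q) * sqrt s"
    using ln_le_two_sqrt_minus_two[of "t * s / q"] by simp
  then have "max 0 (ln (t * s / q)) / s\<^sup>2 \<le> 2 * sqrt (t / q) * (sqrt s / s\<^sup>2)"
    by (simp add: divide_right_mono)
  then show ?thesis using True assms by (simp add: sqrt_div_square_eq_powr)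
next
  case False
  then have "t * s / q < 1" using assms by (simp add: field_simps)
  then show ?thesis using False assms by simp
qed

lemma kappa_integrand_le:
  assumes M: "weight_seq M" and "0 < t"
  shows "ennreal (indicator {1..} s * (omegaM_tilde M (t * s) / s\<^sup>2))
    \<le> ennreal (4 * sqrt t * indicator {1..} s * s powr (-3/2))
      + (\<Sum>k. ennreal (2 * sqrt (t / quot M k) * indicator {quot M k / t..} s * s powr (-3/2)))"
  (is "_ \<le> ennreal (?f0 s) + (\<Sum>k. ennreal (?F k s))")
proof (cases "1 \<le> s")
  case True
  have "0 < t * s" using \<open>0 < t\<close> True by simp
  obtain P where P: "\<forall>k>P. t * s \<le> quot M k"
    using weight_seq_eventually_quot_ge[OF M] by blast
  have "omegaM M (t * s) / s\<^sup>2 \<le> (\<Sum>k=1..P. max 0 (ln (t * s / quot M k))) / s\<^sup>2"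
    using omegaM_le_sum_pos_part[OF M \<open>0 < t * s\<close> P] by (simp add: divide_right_mono)
  also have "\<dots> \<le> (\<Sum>k=1..P. ?F k s)"
    unfolding sum_divide_distrib
    by (intro sum_mono pos_part_ln_div_square_le[OF \<open>0 < t\<close> True weight_seq_quot_pos[OF M]])
  finally have omega: "omegaM M (t * s) / s\<^sup>2 \<le> (\<Sum>k=1..P. ?F k s)" .
  have "ln (1 + (t * s)\<^sup>2) / s\<^sup>2 \<le> 4 * sqrt (t * s) / s\<^sup>2"
    using ln_one_plus_square_le[of "t * s"] \<open>0 < t * s\<close> by (simp add: divide_right_mono)
  also have "\<dots> = 4 * sqrt t * (sqrt s / s\<^sup>2)"
    using \<open>0 < t\<close> True by (simp add: real_sqrt_mult)
  also have "\<dots> = ?f0 s"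
    using True by (simp only: sqrt_div_square_eq_powr) simp
  finally have log: "ln (1 + (t * s)\<^sup>2) / s\<^sup>2 \<le> ?f0 s" .
  have F_nonneg: "0 \<le> ?F k s" for k
    using \<open>0 < t\<close> weight_seq_quot_pos[OF M, of k] by simp
  have "ennreal (indicator {1..} s * (omegaM_tilde M (t * s) / s\<^sup>2)) \<le> ennreal (?f0 s + (\<Sum>k=1..P. ?F k s))"
    using omega log True by (intro ennreal_leI) (simp add: omegaM_tilde_def add_divide_distrib)
  also have "\<dots> = ennreal (?f0 s) + (\<Sum>k=1..P. ennreal (?F k s))"
    using \<open>0 < t\<close> F_nonneg by (simp add: ennreal_plus sum_nonneg)
  also have "\<dots> \<le> ennreal (?f0 s) + (\<Sum>k. ennreal (?F k s))"
    by (intro add_left_mono sum_le_suminf) auto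
  finally show ?thesis .
qed simp

lemma nn_integral_kappa_integrand_finite:
  assumes M: "weight_seq M" and "nonquasianalytic M" and "0 < t"
  shows "(\<integral>\<^sup>+ s. ennreal (indicator {1..} s * (omegaM_tilde M (t * s) / s\<^sup>2)) \<partial>lborel) < top"
proof -
  define f0 where "f0 s = 4 * sqrt t * indicator {1..} s * s powr (-3/2)" for s :: real
  define F where "F k s = 2 * sqrt (t / quot M k) * indicator {quot M k / t..} s * s powr (-3/2)"
    for k and s :: real
  have f0: "(\<integral>\<^sup>+ s. ennreal (f0 s) \<partial>lborel) = ennreal (8 * sqrt t)"
    using \<open>0 < t\<close> nn_integral_powr_tail[of 1 "4 * sqrt t"] by (simp add: f0_def)
  have F: "(\<integral>\<^sup>+ s. ennreal (F k s) \<partial>lborel) = ennreal (4 * t / quot M k)" for k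
    using \<open>0 < t\<close> weight_seq_quot_pos[OF M, of k]
    unfolding F_def by (subst nn_integral_powr_tail) (auto simp: real_sqrt_divide field_simps)
  have "summable (\<lambda>k. 4 * t / quot M k)"
    using summable_mult[of "\<lambda>k. 1 / quot M k" "4 * t"] \<open>nonquasianalytic M\<close>
    by (simp add: nonquasianalytic_def)
  then have "(\<Sum>k. ennreal (4 * t / quot M k)) \<noteq> top"
    by (rule ennreal_suminf_neq_top) (use \<open>0 < t\<close> weight_seq_quot_pos[OF M] in \<open>simp add: less_imp_le\<close>)
  have "(\<integral>\<^sup>+ s. ennreal (indicator {1..} s * (omegaM_tilde M (t * s) / s\<^sup>2)) \<partial>lborel)
    \<le> (\<integral>\<^sup>+ s. ennreal (f0 s) + (\<Sum>k. ennreal (F k s)) \<partial>lborel)"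
    unfolding f0_def F_def by (intro nn_integral_mono kappa_integrand_le[OF M \<open>0 < t\<close>])
  also have "\<dots> = (\<integral>\<^sup>+ s. ennreal (f0 s) \<partial>lborel) + (\<Sum>k. \<integral>\<^sup>+ s. ennreal (F k s) \<partial>lborel)"
    by (simp add: nn_integral_add nn_integral_suminf f0_def F_def)
  also have "\<dots> = ennreal (8 * sqrt t) + (\<Sum>k. ennreal (4 * t / quot M k))"
    by (simp only: f0 F)
  also have "\<dots> < top"
    using \<open>(\<Sum>k. ennreal (4 * t / quot M k)) \<noteq> top\<close> by (simp add: less_top)
  finally show ?thesis .
qed

lemma kappa_eq_nn_integral:
  assumes M: "weight_seq M"
  shows "kappa (omegaM_tilde M) t
    = enn2real (\<integral>\<^sup>+ s. ennreal (indicator {1..} s * (omegaM_tilde M (t * s) / s\<^sup>2)) \<partial>lborel)"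
  unfolding kappa_def set_lebesgue_integral_def real_scaleR_def
proof (rule integral_eq_nn_integral)
  show "(\<lambda>s. indicator {1..} s * (omegaM_tilde M (t * s) / s\<^sup>2)) \<in> borel_measurable lborel"
    using M unfolding omegaM_tilde_def by measurable
  show "AE s in lborel. 0 \<le> indicator {1..} s * (omegaM_tilde M (t * s) / s\<^sup>2)"
    using omegaM_nonneg[OF M] by (simp add: omegaM_tilde_def)
qed

section \<open>Lower bounds for kappa\<close>

lemma has_integral_le_kappa:
  assumes M: "weight_seq M" and "nonquasianalytic M" and "0 < t"
    and h: "h \<in> borel_measurable borel" "(h has_integral v) UNIV" "\<And>s. 0 \<le> h s"
    and h_le: "\<And>s. h s \<le> indicator {1..} s * (omegaM_tilde M (t * s) / s\<^sup>2)"
  shows "v \<le> kappa (omegaM_tilde M) t"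
proof -
  have "ennreal v = (\<integral>\<^sup>+ s. ennreal (h s) \<partial>lborel)"
    using h by (intro nn_integral_has_integral_lborel[symmetric])
  also have "\<dots> \<le> (\<integral>\<^sup>+ s. ennreal (indicator {1..} s * (omegaM_tilde M (t * s) / s\<^sup>2)) \<partial>lborel)"
    by (intro nn_integral_mono ennreal_leI h_le)
  finally have "enn2real (ennreal v) \<le> kappa (omegaM_tilde M) t"
    unfolding kappa_eq_nn_integral[OF M]
    by (rule enn2real_mono) (rule nn_integral_kappa_integrand_finite[OF M \<open>nonquasianalytic M\<close> \<open>0 < t\<close>])
  moreover have "0 \<le> v"
    using h(3) by (intro has_integral_nonneg[OF h(2)]) auto
  ultimately show ?thesis by simp
qed

lemma kappa_ge_omegaM_plus_sum:
  assumes M: "weight_seq M" and "nonquasianalytic M" and "0 < t"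
    and A: "finite A" "A \<subseteq> {1..}"
  shows "omegaM M t + (\<Sum>k\<in>A. 1 / (exp 1 * max 1 (quot M k / t))) \<le> kappa (omegaM_tilde M) t"
proof -
  define c where "c k = exp 1 * max 1 (quot M k / t)" for k
  have c_ge_1: "1 \<le> c k" for k
    using mult_mono[of 1 "exp 1" 1 "max 1 (quot M k / t)"] by (simp add: c_def)
  define h where "h s = omegaM M t * (indicator {1..} s / s\<^sup>2) + (\<Sum>k\<in>A. indicator {c k..} s / s\<^sup>2)"
    for s :: real
  have "((\<lambda>s. omegaM M t * (indicator {1..} s / s\<^sup>2)) has_integral omegaM M t * (1 / 1)) UNIV"
    by (intro has_integral_mult_right has_integral_inverse_square_tail) simp
  then have "((\<lambda>s. omegaM M t * (indicator {1..} s / s\<^sup>2)) has_integral omegaM M t) UNIV"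
    by (simp only: div_by_1 mult_1_right)
  moreover have "((\<lambda>s. \<Sum>k\<in>A. indicator {c k..} s / s\<^sup>2) has_integral (\<Sum>k\<in>A. 1 / c k)) UNIV"
    using c_ge_1 by (intro has_integral_sum A(1) has_integral_inverse_square_tail) (meson less_le_trans zero_less_one)
  ultimately have h_integral: "(h has_integral omegaM M t + (\<Sum>k\<in>A. 1 / c k)) UNIV"
    unfolding h_def by (rule has_integral_add)
  have "h \<in> borel_measurable borel"
    unfolding h_def using A(1) by measurable
  moreover note h_integral
  moreover have "0 \<le> h s" for s
    unfolding h_def using omegaM_nonneg[OF M, of t] by (intro add_nonneg_nonneg sum_nonneg) auto
  moreover have "h s \<le> indicator {1..} s * (omegaM_tilde M (t * s) / s\<^sup>2)" for s
  proof (cases "1 \<le> s")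
    case True
    have "h s = (omegaM M t + (\<Sum>k\<in>A. of_bool (exp 1 * max 1 (quot M k / t) \<le> s))) / s\<^sup>2"
      using True by (simp add: h_def c_def add_divide_distrib sum_divide_distrib indicator_def)
    also have "\<dots> \<le> omegaM M (t * s) / s\<^sup>2"
      using omegaM_mult_ge[OF M \<open>0 < t\<close> True A] by (intro divide_right_mono) auto
    also have "\<dots> \<le> omegaM_tilde M (t * s) / s\<^sup>2"
      by (intro divide_right_mono) (simp_all add: omegaM_tilde_def)
    finally show ?thesis using True by simp
  next
    case False
    then have "s \<notin> {c k..}" for k using c_ge_1[of k] by auto
    then show ?thesis using False by (simp add: h_def)
  qed
  ultimately show ?thesis
    unfolding c_def by (rule has_integral_le_kappa[OF M \<open>nonquasianalytic M\<close> \<open>0 < t\<close>])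
qed

lemma min_div_le_inverse_max:
  fixes t p q :: real
  assumes "0 < t" "0 < p" "p \<le> q"
  shows "min t p / q \<le> 1 / max 1 (q / t)"
proof (cases "q \<le> t")
  case True
  then show ?thesis using assms by (simp add: max_def min_def divide_le_eq_1)
next
  case False
  then have "min t p / q \<le> t / q" using assms by (simp add: divide_right_mono)
  then show ?thesis using False assms by (simp add: max_def)
qed

lemma kappa_ge_omegaM_plus_partial_tail:
  assumes M: "weight_seq M" and "nonquasianalytic M" and "0 < t" and "1 \<le> j"
  shows "omegaM M t + min t (quot M j) * (\<Sum>k<n. 1 / quot M (k + j)) / exp 1
    \<le> kappa (omegaM_tilde M) t"
proof -
  have "min t (quot M j) * (\<Sum>k<n. 1 / quot M (k + j)) / exp 1
      = (\<Sum>k<n. min t (quot M j) / quot M (k + j) / exp 1)"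
    by (simp add: sum_distrib_left sum_divide_distrib)
  also have "\<dots> \<le> (\<Sum>k<n. 1 / (exp 1 * max 1 (quot M (k + j) / t)))"
  proof (intro sum_mono)
    fix k
    have "min t (quot M j) / quot M (k + j) \<le> 1 / max 1 (quot M (k + j) / t)"
      using weight_seq_quot_mono[OF M] by (intro min_div_le_inverse_max \<open>0 < t\<close> weight_seq_quot_pos[OF M]) simp
    from divide_right_mono[OF this, of "exp 1"]
    show "min t (quot M j) / quot M (k + j) / exp 1 \<le> 1 / (exp 1 * max 1 (quot M (k + j) / t))"
      by (simp add: mult.commute)
  qed
  also have "\<dots> = (\<Sum>k\<in>(\<lambda>k. k + j) ` {..<n}. 1 / (exp 1 * max 1 (quot M k / t)))"
    by (simp add: sum.reindex)
  also have "omegaM M t + \<dots> \<le> kappa (omegaM_tilde M) t"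
    using \<open>1 \<le> j\<close> by (intro kappa_ge_omegaM_plus_sum[OF assms(1-3)]) auto
  finally show ?thesis by simp
qed

lemma nonquasianalytic_summable_tail:
  "nonquasianalytic M \<Longrightarrow> summable (\<lambda>k. 1 / quot M (k + j))"
  using summable_ignore_initial_segment[of "\<lambda>k. 1 / quot M k" j] by (simp add: nonquasianalytic_def)

lemma nonquasianalytic_tail_pos:
  "weight_seq M \<Longrightarrow> nonquasianalytic M \<Longrightarrow> 0 < (\<Sum>k. 1 / quot M (k + j))"
  using weight_seq_quot_pos[of M] by (intro suminf_pos nonquasianalytic_summable_tail) auto

lemma kappa_ge_omegaM_plus_tail:
  assumes M: "weight_seq M" and "nonquasianalytic M" and "0 < t" and "1 \<le> j"
  shows "omegaM M t + min t (quot M j) * (\<Sum>k. 1 / quot M (k + j)) / exp 1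
    \<le> kappa (omegaM_tilde M) t"
proof (rule LIMSEQ_le_const2)
  show "(\<lambda>n. omegaM M t + min t (quot M j) * (\<Sum>k<n. 1 / quot M (k + j)) / exp 1)
      \<longlonglongrightarrow> omegaM M t + min t (quot M j) * (\<Sum>k. 1 / quot M (k + j)) / exp 1"
    using nonquasianalytic_summable_tail[OF \<open>nonquasianalytic M\<close>]
    by (intro tendsto_intros summable_LIMSEQ) simp_all
qed (use kappa_ge_omegaM_plus_partial_tail[OF assms] in blast)

section \<open>Comparison of the associated sequence with M\<close>

lemma mult_ln_le_linear:
  fixes a x r :: real
  assumes "0 < a" "0 < x" "0 < r"
  shows "a * ln r \<le> a * ln (a / x) - a + r * x"
proof -
  have "ln (r * x / a) \<le> r * x / a - 1"
    using assms by (intro ln_le_minus_one) simp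
  moreover have "ln (r * x / a) = ln r - ln (a / x)"
    using assms by (simp add: ln_div ln_mult)
  ultimately have "a * (ln r - ln (a / x)) \<le> a * (r * x / a - 1)"
    using assms by (simp add: mult_left_mono)
  then show ?thesis
    using assms by (simp add: algebra_simps)
qed

lemma ln_power_minus_omegaM_le:
  assumes M: "weight_seq M" and "0 < t" and "i \<le> j"
  shows "real j * ln t - omegaM M t \<le> ln (M i) + real (j - i) * ln (min t (quot M j))"
proof (cases "t \<le> quot M j")
  case True
  then show ?thesis
    using omegaM_ge[OF M \<open>0 < t\<close>, of i] \<open>i \<le> j\<close> by (simp add: of_nat_diff algebra_simps)
next
  case False
  have "M j \<le> M i * quot M j ^ (j - i)"
    by (rule weight_seq_le_quot_power[OF M \<open>i \<le> j\<close>])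
  then have "ln (M j) \<le> ln (M i * quot M j ^ (j - i))"
    using weight_seq_pos[OF M, of j] by (rule ln_mono)
  also have "\<dots> = ln (M i) + real (j - i) * ln (quot M j)"
    using weight_seq_pos[OF M] weight_seq_quot_pos[OF M, of j] by (simp add: ln_mult_pos ln_realpow)
  finally show ?thesis
    using omegaM_ge[OF M \<open>0 < t\<close>, of j] False by simp
qed

lemma phistar_kappa_le:
  assumes M: "weight_seq M" and "nonquasianalytic M"
    and D: "\<And>t. 0 < t \<Longrightarrow> kappa (omegaM_tilde M) t - D \<le> \<kappa>' t"
    and "i < j"
  shows "phistar \<kappa>' (real j)
    \<le> ln (M i) + real (j - i) * ln (real (j - i) / (\<Sum>k. 1 / quot M (k + j))) + D"
  unfolding phistar_def
proof (rule cSUP_least)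
  define L where "L = real (j - i)"
  define \<sigma> where "\<sigma> = (\<Sum>k. 1 / quot M (k + j))"
  have "0 < L" using \<open>i < j\<close> by (simp add: L_def)
  have "0 < \<sigma>"
    unfolding \<sigma>_def by (rule nonquasianalytic_tail_pos[OF M \<open>nonquasianalytic M\<close>])
  fix y :: real
  define t where "t = exp y"
  define r where "r = min t (quot M j)"
  have "0 < t" "0 < r"
    using weight_seq_quot_pos[OF M, of j] by (auto simp: t_def r_def)
  have "real j * y - \<kappa>' t \<le> real j * ln t - omegaM M t - r * \<sigma> / exp 1 + D"
    using kappa_ge_omegaM_plus_tail[OF M \<open>nonquasianalytic M\<close> \<open>0 < t\<close>, of j] D[OF \<open>0 < t\<close>] \<open>i < j\<close>
    by (simp add: t_def r_def \<sigma>_def)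
  also have "\<dots> \<le> ln (M i) + L * ln r - r * (\<sigma> / exp 1) + D"
    using ln_power_minus_omegaM_le[OF M \<open>0 < t\<close>, of i j] \<open>i < j\<close> by (simp add: L_def r_def)
  also have "\<dots> \<le> ln (M i) + L * ln (L / \<sigma>) + D"
  proof -
    have "L * ln r \<le> L * ln (L / (\<sigma> / exp 1)) - L + r * (\<sigma> / exp 1)"
      using \<open>0 < L\<close> \<open>0 < \<sigma>\<close> \<open>0 < r\<close> by (intro mult_ln_le_linear) auto
    moreover have "ln (exp 1 * (L / \<sigma>)) = 1 + ln (L / \<sigma>)"
      using ln_mult_pos[of "exp 1" "L / \<sigma>"] \<open>0 < L\<close> \<open>0 < \<sigma>\<close> by simp
    moreover have "L / (\<sigma> / exp 1) = exp 1 * (L / \<sigma>)"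
      by simp
    ultimately show ?thesis by (simp only:) (simp add: algebra_simps)
  qed
  finally show "real j * y - \<kappa>' (exp y) \<le> ln (M i) + real (j - i) * ln (real (j - i) / \<sigma>) + D"
    by (simp add: t_def L_def)
qed simp

lemma assoc_seq_root_le:
  assumes M: "weight_seq M" and "nonquasianalytic M"
    and "0 \<le> D" and D: "\<And>t. 0 < t \<Longrightarrow> kappa (omegaM_tilde M) t - D \<le> \<kappa>' t"
    and "i < j"
  shows "(assoc_seq \<kappa>' j / M i) powr (1 / real (j - i))
    \<le> exp D * real (j - i) / (\<Sum>k. 1 / quot M (k + j))"
proof -
  define L where "L = j - i"
  define \<sigma> where "\<sigma> = (\<Sum>k. 1 / quot M (k + j))"
  define x where "x = exp D * (real L / \<sigma>)"
  have "0 < L" using \<open>i < j\<close> by (simp add: L_def)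
  have "0 < \<sigma>"
    unfolding \<sigma>_def by (rule nonquasianalytic_tail_pos[OF M \<open>nonquasianalytic M\<close>])
  then have "0 < x" using \<open>0 < L\<close> by (simp add: x_def)
  have "0 < M i" by (rule weight_seq_pos[OF M])
  have "assoc_seq \<kappa>' j \<le> exp (ln (M i) + real L * ln (real L / \<sigma>) + D)"
    unfolding assoc_seq_def L_def \<sigma>_def using phistar_kappa_le[OF M \<open>nonquasianalytic M\<close> D \<open>i < j\<close>] by simp
  also have "\<dots> = M i * (real L / \<sigma>) ^ L * exp D"
    using \<open>0 < M i\<close> \<open>0 < L\<close> \<open>0 < \<sigma>\<close> by (simp add: exp_add exp_of_nat_mult[symmetric] ln_realpow[symmetric])
  also have "\<dots> \<le> M i * x ^ L"
  proof -
    have "exp D \<le> exp D ^ L" using \<open>0 \<le> D\<close> \<open>0 < L\<close> by (intro self_le_power) auto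
    then have "(real L / \<sigma>) ^ L * exp D \<le> (real L / \<sigma>) ^ L * exp D ^ L"
      using \<open>0 < \<sigma>\<close> by (intro mult_left_mono) auto
    also have "\<dots> = x ^ L"
      unfolding x_def power_mult_distrib by (rule mult.commute)
    finally show ?thesis
      using \<open>0 < M i\<close> by (simp add: mult.assoc)
  qed
  finally have "assoc_seq \<kappa>' j / M i \<le> x ^ L"
    using \<open>0 < M i\<close> by (simp add: field_simps)
  then have "(assoc_seq \<kappa>' j / M i) powr (1 / real L) \<le> (x ^ L) powr (1 / real L)"
    using \<open>0 < M i\<close> by (intro powr_mono2) (auto simp: assoc_seq_def)
  also have "\<dots> = x"
    using \<open>0 < x\<close> \<open>0 < L\<close> by (simp add: powr_realpow[symmetric] powr_powr)
  finally show ?thesis by (simp add: x_def L_def \<sigma>_def)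
qed

lemma prec_SV_assoc_seq:
  assumes M: "weight_seq M" and "nonquasianalytic M"
    and "normalized_version (kappa (omegaM_tilde M)) \<kappa>'"
  shows "prec_SV (assoc_seq \<kappa>') M"
proof -
  obtain D where D_abs: "\<And>t. 0 \<le> t \<Longrightarrow> \<bar>\<kappa>' t - kappa (omegaM_tilde M) t\<bar> \<le> D"
    using assms(3) by (auto simp: normalized_version_def)
  have "0 \<le> D" using D_abs[of 0] by simp
  have D: "kappa (omegaM_tilde M) t - D \<le> \<kappa>' t" if "0 < t" for t
    using D_abs[of t] that by (simp add: abs_le_iff)
  have "(1 / real j) * (assoc_seq \<kappa>' j / (real 1 ^ j * M i)) powr (1 / real (j - i))
      * (\<Sum>k. 1 / quot M (k + j)) \<le> exp D" if "i < j" for i j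
  proof -
    define \<sigma> where "\<sigma> = (\<Sum>k. 1 / quot M (k + j))"
    have "0 < \<sigma>"
      unfolding \<sigma>_def by (rule nonquasianalytic_tail_pos[OF M \<open>nonquasianalytic M\<close>])
    have "(assoc_seq \<kappa>' j / M i) powr (1 / real (j - i)) \<le> exp D * real (j - i) / \<sigma>"
      unfolding \<sigma>_def by (rule assoc_seq_root_le[OF M \<open>nonquasianalytic M\<close> \<open>0 \<le> D\<close> D \<open>i < j\<close>])
    then have "(1 / real j) * (assoc_seq \<kappa>' j / M i) powr (1 / real (j - i)) * \<sigma>
        \<le> (1 / real j) * (exp D * real (j - i) / \<sigma>) * \<sigma>"
      using \<open>0 < \<sigma>\<close> by (intro mult_right_mono mult_left_mono) auto
    also have "\<dots> \<le> exp D"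
      using \<open>i < j\<close> \<open>0 < \<sigma>\<close> by (simp add: field_simps)
    finally show ?thesis by (simp add: \<sigma>_def)
  qed
  then show ?thesis
    unfolding prec_SV_def by (intro exI[of _ "1::nat"] conjI exI[of _ "exp D"] allI impI) auto
qed

theorem corollary4p3:
  fixes Mat :: "real \<Rightarrow> nat \<Rightarrow> real"
    and \<kappa>n :: "real \<Rightarrow> real \<Rightarrow> real"
  assumes "weight_matrix Mat"
    and "nonquasianalytic_matrix Mat"
    and "R_moderate_growth Mat"
    and "\<forall>\<alpha>>0. normalized_version (kappa (omegaM_tilde (Mat \<alpha>))) (\<kappa>n \<alpha>)"
  shows "\<forall>\<alpha>>0. \<exists>\<beta>>0. prec_SV (assoc_seq (\<kappa>n \<alpha>)) (Mat \<beta>)"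
proof (intro allI impI)
  fix \<alpha> :: real assume "0 < \<alpha>"
  have "prec_SV (assoc_seq (\<kappa>n \<alpha>)) (Mat \<alpha>)"
    using assms(1,2,4) \<open>0 < \<alpha>\<close>
    by (intro prec_SV_assoc_seq) (auto simp: weight_matrix_def nonquasianalytic_matrix_def)
  then show "\<exists>\<beta>>0. prec_SV (assoc_seq (\<kappa>n \<alpha>)) (Mat \<beta>)"
    using \<open>0 < \<alpha>\<close> by blast
qed

end
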